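(* Let $q=2p$ with $p$ an odd prime. Consider the map $\mathcal S$ sending a pair of integers $(q_1,q_2)$ with $q_1,q_2,q_1+q_2,q_1-q_2$ all $\not\equiv0\pmod q$ to $\mathcal S(q_1,q_2)=(\psi(q_1,q_2),\alpha(q_1,q_2),\beta(q_1,q_2))$. Then $\mathcal S$ takes at most $6$ distinct values.
   Context: Let $\gamma=e^{2\pi i/q}$. Let $A$ be the set of residues in $\{1,\dots,q-1\}$ coprime to $q$, $B=\{2,4,\dots,2(p-1)\}$ and $C=\{p\}$. For $S\subset\{1,\dots,q-1\}$ put $\Pi_S(q_1,q_2)(z)=\sum_{l\in S}\prod_{i=1}^{2}(z-\gamma^{q_il})(z-\gamma^{-q_il})$; then $\psi=\Pi_A$, $\alpha=\Pi_B$, $\beta=\Pi_C$. *)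

theory Defs
  imports "HOL-Computational_Algebra.Polynomial" Complex_Main
begin

text \<open>gamma = exp(2 pi i / q); gamma^(k) for integer k is cis(2 pi k / q).\<close>
definition gpow :: "nat \<Rightarrow> int \<Rightarrow> complex" where
  "gpow q k = cis (2 * pi * of_int k / of_nat q)"

definition PiS :: "nat \<Rightarrow> nat set \<Rightarrow> int \<Rightarrow> int \<Rightarrow> complex poly" where
  "PiS q S q1 q2 = (\<Sum>l\<in>S.
       ([:- gpow q (q1 * int l), 1:] * [:- gpow q (- q1 * int l), 1:]) *
       ([:- gpow q (q2 * int l), 1:] * [:- gpow q (- q2 * int l), 1:]))"

definition setA :: "nat \<Rightarrow> nat set" where
  "setA q = {l \<in> {1..q - 1}. coprime l q}"

definition setB :: "nat \<Rightarrow> nat set" where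
  "setB p = {2 * k | k. 1 \<le> k \<and> k \<le> p - 1}"

definition setC :: "nat \<Rightarrow> nat set" where
  "setC p = {p}"

definition psiP :: "nat \<Rightarrow> int \<Rightarrow> int \<Rightarrow> complex poly" where
  "psiP p q1 q2 = PiS (2 * p) (setA (2 * p)) q1 q2"

definition alphaP :: "nat \<Rightarrow> int \<Rightarrow> int \<Rightarrow> complex poly" where
  "alphaP p q1 q2 = PiS (2 * p) (setB p) q1 q2"

definition betaP :: "nat \<Rightarrow> int \<Rightarrow> int \<Rightarrow> complex poly" where
  "betaP p q1 q2 = PiS (2 * p) (setC p) q1 q2"

end

theory Submission
  imports Defs
begin

(*
  Write T(k) = gamma^k + gamma^-k.  Each summand of Pi_S is a product
  (z^2 - T(q1 l) z + 1)(z^2 - T(q2 l) z + 1), and since T(a) T(b) = T(a+b) + T(a-b),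
  Pi_S(q1,q2) is determined by card S and the trace sums W_S(n) = sum_{l in S} T(n l)
  at n = q1, q2, q1+q2, q1-q2, entering only through W_S(q1)+W_S(q2) and
  W_S(q1+q2)+W_S(q1-q2).
  The sets A, B, C are invariant under multiplication by units modulo q = 2p, so W_S(n)
  only depends on n up to a unit, i.e. on its divisor class gcd(n, 2p) in {1, 2, p}
  (when 2p does not divide n).  Finally a parity and divisibility analysis shows that
  the classes of (q1, q2, q1+q2, q1-q2) form, up to swapping within the two pairs, one
  of only six patterns, so the triple (psi, alpha, beta) takes at most six values.
*)

lemma gpow_add: "gpow q (a + b) = gpow q a * gpow q b"
  unfolding gpow_def by (simp add: cis_mult add_divide_distrib distrib_left)

lemma gpow_mod:
  assumes "q > 0"
  shows "gpow q (k mod int q) = gpow q k"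
proof -
  have period: "gpow q (int q * m) = 1" for m
  proof -
    have "2 * pi * of_int (int q * m) / of_nat q = 2 * pi * (of_int m :: real)"
      using assms by simp
    then show ?thesis unfolding gpow_def by simp
  qed
  have "gpow q k = gpow q (k mod int q + int q * (k div int q))" by simp
  also have "\<dots> = gpow q (k mod int q)" by (simp only: gpow_add period mult_1_right)
  finally show ?thesis by simp
qed

lemma gpow_inverse: "gpow q k * gpow q (- k) = 1"
  using gpow_add[of q k "- k"] by (simp add: gpow_def)

section \<open>Reduction of Pi_S to trace sums\<close>

definition T :: "nat \<Rightarrow> int \<Rightarrow> complex" where
  "T q k = gpow q k + gpow q (- k)"

definition W :: "nat \<Rightarrow> nat set \<Rightarrow> int \<Rightarrow> complex" where
  "W q S n = (\<Sum>l\<in>S. T q (n * int l))"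

text \<open>The product-to-sum formula for traces, the source of the terms in q1+q2 and q1-q2.\<close>

lemma T_mult: "T q a * T q b = T q (a + b) + T q (a - b)"
  unfolding T_def by (simp add: gpow_add[symmetric] algebra_simps)

definition H :: "complex \<Rightarrow> complex \<Rightarrow> complex \<Rightarrow> complex poly" where
  "H k a b = [:k, -a, 2*k+b, -a, k:]"

lemma sum_H: "(\<Sum>l\<in>S. H 1 (f l) (g l)) = H (of_nat (card S)) (\<Sum>l\<in>S. f l) (\<Sum>l\<in>S. g l)"
proof (cases "finite S")
  case True
  then show ?thesis
    by (induction S rule: finite_induct) (simp_all add: H_def algebra_simps)
qed (simp add: H_def)

definition PiW :: "nat \<Rightarrow> nat set \<Rightarrow> int \<Rightarrow> int \<Rightarrow> int \<Rightarrow> int \<Rightarrow> complex poly" where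
  "PiW q S a b c d = H (of_nat (card S)) (W q S a + W q S b) (W q S c + W q S d)"

text \<open>Only the two pair sums enter, so swapping within a pair changes nothing.\<close>

lemma PiW_swap: "PiW q S a b c d = PiW q S b a c d" "PiW q S a b c d = PiW q S a b d c"
  unfolding PiW_def by (simp_all add: add.commute)

lemma PiS_eq_PiW: "PiS q S q1 q2 = PiW q S q1 q2 (q1 + q2) (q1 - q2)"
proof -
  have factor: "[:- gpow q a, 1:] * [:- gpow q (- a), 1:] = [:1, - T q a, 1:]" for a
    using gpow_inverse[of q a] by (simp add: T_def algebra_simps)
  have quartic: "[:1, - s, 1:] * [:1, - t, 1:] = [:1, -(s + t), 2 + s * t, -(s + t), 1:]"
    for s t :: complex
    by (simp add: algebra_simps)
  have "PiS q S q1 q2 = (\<Sum>l\<in>S. H 1 (T q (q1 * int l) + T q (q2 * int l))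
          (T q ((q1 + q2) * int l) + T q ((q1 - q2) * int l)))"
    unfolding PiS_def
  proof (rule sum.cong[OF refl])
    fix l
    have "- q1 * int l = - (q1 * int l)" "- q2 * int l = - (q2 * int l)" by simp_all
    then show "[:- gpow q (q1 * int l), 1:] * [:- gpow q (- q1 * int l), 1:] *
        ([:- gpow q (q2 * int l), 1:] * [:- gpow q (- q2 * int l), 1:]) =
        H 1 (T q (q1 * int l) + T q (q2 * int l)) (T q ((q1 + q2) * int l) + T q ((q1 - q2) * int l))"
      by (simp only: factor quartic T_mult) (simp add: H_def algebra_simps)
  qed
  then show ?thesis
    unfolding sum_H PiW_def W_def sum.distrib .
qed

section \<open>Invariance of trace sums under units\<close>

lemma T_cong: "q > 0 \<Longrightarrow> a mod int q = b mod int q \<Longrightarrow> T q a = T q b"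
  unfolding T_def by (metis gpow_mod mod_minus_cong)

lemma W_cong: "q > 0 \<Longrightarrow> n mod int q = m mod int q \<Longrightarrow> W q S n = W q S m"
  unfolding W_def by (intro sum.cong refl T_cong) (auto intro: mod_mult_cong)

definition unit_invariant :: "nat \<Rightarrow> nat set \<Rightarrow> bool" where
  "unit_invariant q S \<longleftrightarrow> finite S \<and> S \<subseteq> {1..<q} \<and>
     (\<forall>u. coprime u (int q) \<longrightarrow> (\<forall>l\<in>S. nat ((u * int l) mod int q) \<in> S))"

text \<open>On a unit-invariant set multiplication by a unit permutes S, so it does not change W.\<close>

lemma W_unit:
  assumes q: "q > 0" and S: "unit_invariant q S" and u: "coprime u (int q)"
  shows "W q S (u * n) = W q S n"
proof -
  define f where "f l = nat ((u * int l) mod int q)" for l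
  have fin: "finite S" and sub: "S \<subseteq> {1..<q}" and into: "f ` S \<subseteq> S"
    using S u unfolding unit_invariant_def f_def by auto
  have int_f: "int (f l) = (u * int l) mod int q" for l
    unfolding f_def using q by simp
  have inj: "inj_on f S"
  proof
    fix a b assume a: "a \<in> S" and b: "b \<in> S" and "f a = f b"
    then have "(u * int a) mod int q = (u * int b) mod int q"
      using int_f[of a] int_f[of b] by simp
    then have "int q dvd u * (int a - int b)"
      by (simp add: mod_eq_dvd_iff right_diff_distrib)
    then have "int q dvd int a - int b"
      using u by (metis coprime_commute coprime_dvd_mult_right_iff)
    moreover have "a < q" "b < q" using a b sub by auto
    ultimately show "a = b"
      using dvd_imp_le_int[of "int a - int b" "int q"] by fastforce
  qed
  have img: "f ` S = S" using endo_inj_surj[OF fin into inj] .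
  have "W q S n = (\<Sum>l\<in>S. T q (n * int (f l)))"
    unfolding W_def by (subst img[symmetric]) (simp add: sum.reindex[OF inj])
  also have "\<dots> = W q S (u * n)"
    unfolding W_def int_f
    by (intro sum.cong refl T_cong[OF q]) (metis mod_mult_right_eq mult.assoc mult.commute)
  finally show ?thesis by simp
qed

lemma unit_invariant_A:
  assumes q: "q > 1"
  shows "unit_invariant q (setA q)"
  unfolding unit_invariant_def setA_def
proof (intro conjI allI impI ballI)
  show "finite {l \<in> {1..q - 1}. coprime l q}" by simp
  show "{l \<in> {1..q - 1}. coprime l q} \<subseteq> {1..<q}" using q by auto
  fix u :: int and l assume u: "coprime u (int q)" and l: "l \<in> {l \<in> {1..q - 1}. coprime l q}"
  define r where "r = (u * int l) mod int q"
  have "coprime (int l) (int q)" using l by simp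
  then have cop: "coprime r (int q)" using q u by (simp add: r_def coprime_mod_left_iff)
  have range: "0 \<le> r" "r < int q" using q by (simp_all add: r_def)
  have "r \<noteq> 0" using cop q by (intro notI) simp
  moreover have "coprime (nat r) q" using cop range by (metis coprime_int_iff int_nat_eq)
  ultimately show "nat r \<in> {l \<in> {1..q - 1}. coprime l q}" using range by auto
qed

context
  fixes p :: nat
  assumes prime_p: "prime p" and odd_p: "odd p"
begin

lemma p_not_dvd_2: "\<not> int p dvd 2"
proof
  assume "int p dvd 2"
  then have "p dvd 2" using int_dvd_int_iff[of p 2] by simp
  then have "p \<le> 2" by (simp add: dvd_imp_le)
  then have "p = 2" using prime_ge_2_nat[OF prime_p] by linarith
  then show False using odd_p by simp
qed

lemma even_p_dvd_imp_2p_dvd: "even n \<Longrightarrow> int p dvd n \<Longrightarrow> int (2 * p) dvd n"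
proof -
  assume "even n" "int p dvd n"
  moreover have "coprime 2 (int p)"
    using prime_imp_coprime[of "int p" 2] prime_p p_not_dvd_2 by (simp add: coprime_commute)
  ultimately have "2 * int p dvd n" by (rule divides_mult)
  then show ?thesis by simp
qed

lemma p_dvd_double: "int p dvd 2 * n \<Longrightarrow> int p dvd n"
  using prime_dvd_mult_iff[of "int p" 2 n] prime_p p_not_dvd_2 by simp

lemma coprime_2p_iff: "coprime u (int (2 * p)) \<longleftrightarrow> odd u \<and> \<not> int p dvd u"
proof
  assume c: "coprime u (int (2 * p))"
  have "int p \<noteq> 1" using prime_gt_1_nat[OF prime_p] by simp
  moreover have "2 dvd gcd u (int (2 * p))" if "even u" using that by simp
  moreover have "int p dvd gcd u (int (2 * p))" if "int p dvd u" using that by simp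
  ultimately show "odd u \<and> \<not> int p dvd u" using c by auto
next
  assume "odd u \<and> \<not> int p dvd u"
  moreover have "prime (int p)" using prime_p by simp
  ultimately have "coprime u 2" "coprime u (int p)"
    using prime_imp_coprime[of "int p" u] by (simp_all add: coprime_commute)
  then show "coprime u (int (2 * p))" by simp
qed

text \<open>B, the nonzero even residues, is unit-invariant: a unit maps 2k to 2(uk mod p).\<close>

lemma unit_invariant_B: "unit_invariant (2 * p) (setB p)"
  unfolding unit_invariant_def setB_def
proof (intro conjI allI impI ballI)
  have "{2 * k |k. 1 \<le> k \<and> k \<le> p - 1} = (\<lambda>k. 2 * k) ` {1..p - 1}" by auto
  then show "finite {2 * k |k. 1 \<le> k \<and> k \<le> p - 1}" by simp
  show "{2 * k |k. 1 \<le> k \<and> k \<le> p - 1} \<subseteq> {1..<2 * p}" by auto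
  fix u :: int and l assume u: "coprime u (int (2 * p))" and l: "l \<in> {2 * k |k. 1 \<le> k \<and> k \<le> p - 1}"
  then obtain k where k: "l = 2 * k" "1 \<le> k" "k \<le> p - 1" by auto
  define r where "r = (u * int k) mod int p"
  have "\<not> int p dvd u" using u coprime_2p_iff by simp
  moreover have "\<not> int p dvd int k"
  proof
    assume "int p dvd int k"
    then have "p \<le> k" using k(2) by (simp add: dvd_imp_le)
    then show False using k(3) prime_gt_0_nat[OF prime_p] by linarith
  qed
  ultimately have "\<not> int p dvd u * int k"
    using prime_dvd_mult_iff[of "int p"] prime_p by simp
  then have "r \<noteq> 0" unfolding r_def by auto
  moreover have "0 \<le> r" "r < int p" using prime_gt_0_nat[OF prime_p] by (simp_all add: r_def)
  moreover have "(u * int l) mod int (2 * p) = 2 * r"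
  proof -
    have "u * int l = 2 * (u * int k)" "int (2 * p) = 2 * int p" using k(1) by simp_all
    then show ?thesis unfolding r_def by (simp only: mod_mult_mult1)
  qed
  ultimately show "nat ((u * int l) mod int (2 * p)) \<in> {2 * k |k. 1 \<le> k \<and> k \<le> p - 1}"
    by (intro CollectI exI[of _ "nat r"]) auto
qed

text \<open>C = {p} is unit-invariant: units are odd, and an odd multiple of p is p modulo 2p.\<close>

lemma unit_invariant_C: "unit_invariant (2 * p) (setC p)"
  unfolding unit_invariant_def setC_def
proof (intro conjI allI impI ballI)
  show "finite {p}" by simp
  show "{p} \<subseteq> {1..<2 * p}" using prime_gt_0_nat[OF prime_p] by auto
  fix u :: int and l assume u: "coprime u (int (2 * p))" and l: "l \<in> {p}"
  have "odd u" using u coprime_2p_iff by simp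
  then have "u mod 2 = 1" by presburger
  moreover have "(u * int p) mod int (2 * p) = int p * (u mod 2)"
    by (simp add: mult.commute[of u] mult_mod_right[symmetric])
  ultimately show "nat ((u * int l) mod int (2 * p)) \<in> {p}" using l by simp
qed

section \<open>Divisor classes\<close>

text \<open>For n not divisible by 2p the class of n is gcd(n, 2p), one of 2, p and 1.\<close>

definition cls :: "int \<Rightarrow> int" where
  "cls n = (if even n then 2 else if int p dvd n then int p else 1)"

lemma cls_uminus: "cls (- n) = cls n"
  by (simp add: cls_def)

text \<open>Every n not divisible by 2p is a unit multiple of its class modulo 2p, so trace
  sums over unit-invariant sets only depend on the class.\<close>

lemma W_cls:
  assumes S: "unit_invariant (2 * p) S" and n: "\<not> int (2 * p) dvd n"
  shows "W (2 * p) S n = W (2 * p) S (cls n)"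
proof -
  have q: "2 * p > 0" using prime_gt_0_nat[OF prime_p] by simp
  have unit_multiple: "W (2 * p) S (u * c) = W (2 * p) S c" if "odd u" "\<not> int p dvd u" for u c
    using W_unit[OF q S] coprime_2p_iff that by blast
  consider (even) "even n" | (p_mult) "odd n" "int p dvd n" | (unit) "odd n" "\<not> int p dvd n"
    by blast
  then show ?thesis
  proof cases
    case even
    then obtain m where m: "n = 2 * m" by blast
    define u where "u = (if odd m then m else m + int p)"
    have "\<not> int p dvd m" using n even_p_dvd_imp_2p_dvd m by auto
    then have "odd u" "\<not> int p dvd u" using odd_p by (auto simp: u_def dvd_add_left_iff)
    moreover have "n mod int (2 * p) = (u * 2) mod int (2 * p)" unfolding u_def m by auto
    ultimately have "W (2 * p) S n = W (2 * p) S 2" using W_cong[OF q] unit_multiple by metis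
    then show ?thesis using even by (simp add: cls_def)
  next
    case p_mult
    then obtain k where k: "n = int p * k" by blast
    with p_mult have "odd k" by simp
    then have "k mod 2 = 1" by presburger
    moreover have "n mod int (2 * p) = int p * (k mod 2)"
      unfolding k by (simp add: mult_mod_right[symmetric] mult.commute)
    ultimately have "n mod int (2 * p) = int p mod int (2 * p)" using q by simp
    then show ?thesis using W_cong[OF q] p_mult by (simp add: cls_def)
  next
    case unit
    then show ?thesis using unit_multiple[of n 1] by (simp add: cls_def)
  qed
qed

section \<open>The six class patterns\<close>

definition triple :: "int \<Rightarrow> int \<Rightarrow> int \<Rightarrow> int \<Rightarrow> complex poly \<times> complex poly \<times> complex poly" where
  "triple a b c d =
     (PiW (2 * p) (setA (2 * p)) a b c d, PiW (2 * p) (setB p) a b c d, PiW (2 * p) (setC p) a b c d)"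

lemma triple_swap: "triple a b c d = triple b a c d" "triple a b c d = triple a b d c"
  unfolding triple_def by (simp_all only: PiW_swap[of _ _ a b] PiW_swap[of _ _ _ _ c d])

lemma triple_cls:
  assumes "\<not> int (2 * p) dvd q1" "\<not> int (2 * p) dvd q2"
    "\<not> int (2 * p) dvd (q1 + q2)" "\<not> int (2 * p) dvd (q1 - q2)"
  shows "(psiP p q1 q2, alphaP p q1 q2, betaP p q1 q2) =
     triple (cls q1) (cls q2) (cls (q1 + q2)) (cls (q1 - q2))"
proof -
  have "PiW (2 * p) S q1 q2 (q1 + q2) (q1 - q2) =
      PiW (2 * p) S (cls q1) (cls q2) (cls (q1 + q2)) (cls (q1 - q2))"
    if "unit_invariant (2 * p) S" for S
    unfolding PiW_def using W_cls[OF that] assms by simp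
  moreover have "unit_invariant (2 * p) (setA (2 * p))"
    using unit_invariant_A prime_gt_1_nat[OF prime_p] by simp
  ultimately show ?thesis
    unfolding psiP_def alphaP_def betaP_def PiS_eq_PiW triple_def
    using unit_invariant_B unit_invariant_C by simp
qed

text \<open>If q1 is even and q2 odd, then p divides at most one of the odd numbers
  q2, q1+q2, q1-q2, since any two of them determine q1 (or 2 q1), which p cannot divide.\<close>

lemma classes_mixed_parity:
  assumes "\<not> int (2 * p) dvd q1" and parity: "even q1" "odd q2"
  shows "cls q1 = 2 \<and>
    (cls q2, cls (q1 + q2), cls (q1 - q2)) \<in> {(1, 1, 1), (int p, 1, 1), (1, int p, 1), (1, 1, int p)}"
proof -
  have q1: "\<not> int p dvd q1" using assms(1) parity(1) even_p_dvd_imp_2p_dvd by blast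
  have "\<not> (int p dvd q2 \<and> int p dvd (q1 + q2))"
    using q1 dvd_diff[of "int p" "q1 + q2" q2] by auto
  moreover have "\<not> (int p dvd q2 \<and> int p dvd (q1 - q2))"
    using q1 dvd_add[of "int p" "q1 - q2" q2] by auto
  moreover have "\<not> (int p dvd (q1 + q2) \<and> int p dvd (q1 - q2))"
  proof
    assume "int p dvd (q1 + q2) \<and> int p dvd (q1 - q2)"
    then have "int p dvd (q1 + q2) + (q1 - q2)" using dvd_add by blast
    moreover have "(q1 + q2) + (q1 - q2) = 2 * q1" by simp
    ultimately show False using q1 p_dvd_double by metis
  qed
  moreover have "odd (q1 + q2)" "odd (q1 - q2)" using parity by auto
  ultimately show ?thesis using parity by (auto simp: cls_def)
qed

lemma classes_odd_parity:
  assumes "\<not> int (2 * p) dvd (q1 + q2)" and parity: "odd q1" "odd q2"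
  shows "cls (q1 + q2) = 2 \<and> cls (q1 - q2) = 2 \<and>
    (cls q1, cls q2) \<in> {(1, 1), (int p, 1), (1, int p)}"
proof -
  have "even (q1 + q2)" "even (q1 - q2)" using parity by auto
  moreover have "\<not> (int p dvd q1 \<and> int p dvd q2)"
  proof
    assume "int p dvd q1 \<and> int p dvd q2"
    then have "int p dvd q1 + q2" using dvd_add by blast
    then show False using assms(1) \<open>even (q1 + q2)\<close> even_p_dvd_imp_2p_dvd by blast
  qed
  ultimately show ?thesis using parity by (auto simp: cls_def)
qed

text \<open>Combining the parity cases (the case q1 odd, q2 even reduces to the mixed case with
  the roles of q1, q2 exchanged), the class quadruple yields one of six triples.\<close>

lemma triple_cls_patterns:
  assumes nd: "\<not> int (2 * p) dvd q1" "\<not> int (2 * p) dvd q2"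
    "\<not> int (2 * p) dvd (q1 + q2)" "\<not> int (2 * p) dvd (q1 - q2)"
  shows "triple (cls q1) (cls q2) (cls (q1 + q2)) (cls (q1 - q2)) \<in>
    {triple 2 2 2 2, triple 1 1 2 2, triple (int p) 1 2 2,
     triple 2 1 1 1, triple 2 (int p) 1 1, triple 2 1 (int p) 1}"
proof -
  consider "even q1" "even q2" | "odd q1" "odd q2" | "even q1" "odd q2" | "odd q1" "even q2"
    by blast
  then show ?thesis
  proof cases
    case 1
    then show ?thesis by (simp add: cls_def)
  next
    case 2
    from classes_odd_parity[OF nd(3) 2]
    have "cls (q1 + q2) = 2" "cls (q1 - q2) = 2" "(cls q1, cls q2) \<in> {(1, 1), (int p, 1), (1, int p)}"
      by auto
    then show ?thesis using triple_swap(1)[of 1 "int p" 2 2] by auto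
  next
    case 3
    from classes_mixed_parity[OF nd(1) 3]
    have "cls q1 = 2"
      "(cls q2, cls (q1 + q2), cls (q1 - q2)) \<in> {(1, 1, 1), (int p, 1, 1), (1, int p, 1), (1, 1, int p)}"
      by auto
    then show ?thesis using triple_swap(2)[of 2 1 1 "int p"] by auto
  next
    case 4
    from classes_mixed_parity[OF nd(2) 4(2,1)]
    have "cls q2 = 2"
      "(cls q1, cls (q1 + q2), cls (q1 - q2)) \<in> {(1, 1, 1), (int p, 1, 1), (1, int p, 1), (1, 1, int p)}"
      using cls_uminus[of "q1 - q2"] by (simp_all add: add.commute)
    moreover have "triple (cls q1) 2 c d = triple 2 (cls q1) c d" for c d
      using triple_swap(1) by metis
    ultimately show ?thesis using triple_swap(2)[of 2 1 1 "int p"] by auto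
  qed
qed

end

theorem proposition3p1p5:
  fixes p :: nat
  assumes "prime p" and "odd p"
  shows "finite {(psiP p q1 q2, alphaP p q1 q2, betaP p q1 q2) | q1 q2 :: int.
                   \<not> int (2 * p) dvd q1 \<and> \<not> int (2 * p) dvd q2 \<and>
                   \<not> int (2 * p) dvd (q1 + q2) \<and> \<not> int (2 * p) dvd (q1 - q2)}
       \<and> card {(psiP p q1 q2, alphaP p q1 q2, betaP p q1 q2) | q1 q2 :: int.
                   \<not> int (2 * p) dvd q1 \<and> \<not> int (2 * p) dvd q2 \<and>
                   \<not> int (2 * p) dvd (q1 + q2) \<and> \<not> int (2 * p) dvd (q1 - q2)} \<le> 6"
  (is "finite ?X \<and> card ?X \<le> 6")
proof -
  let ?t = "triple p"
  define patterns where "patterns = [?t 2 2 2 2, ?t 1 1 2 2, ?t (int p) 1 2 2,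
     ?t 2 1 1 1, ?t 2 (int p) 1 1, ?t 2 1 (int p) 1]"
  have "?X \<subseteq> set patterns"
  proof
    fix x assume "x \<in> ?X"
    then obtain q1 q2 where x: "x = (psiP p q1 q2, alphaP p q1 q2, betaP p q1 q2)"
      and nd: "\<not> int (2 * p) dvd q1" "\<not> int (2 * p) dvd q2"
        "\<not> int (2 * p) dvd (q1 + q2)" "\<not> int (2 * p) dvd (q1 - q2)"
      by blast
    show "x \<in> set patterns"
      unfolding x triple_cls[OF assms nd] patterns_def using triple_cls_patterns[OF assms nd] by simp
  qed
  moreover have "card (set patterns) \<le> 6"
    using card_length[of patterns] by (simp add: patterns_def)
  ultimately show ?thesis
    using card_mono[of "set patterns" ?X] finite_subset[of ?X "set patterns"] by auto
qed

end
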